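(* Let $X$ be a time-homogeneous affine Markov process (as described in the context) on a filtered probability space $(\Omega,\mathcal F,(\mathcal F_t),\mathbb Q)$ with values in a convex set $E\subseteq\mathbb R^d$, with associated functions $\Phi_{(u,v)}(\tau,\gamma)$, $\Psi_{(u,v)}(\tau,\gamma)$. Let $a_0,b_0,c_0$ be integrable deterministic scalar functions, $a,b,c\in\mathbb R^d$ constant vectors, $q$ a constant, and set $r_c(s)=a_0(s)+\langle a,X(s)\rangle$, $\lambda(s)=b_0(s)+\langle b,X(s)\rangle$, $\phi(s)=c_0(s)+\langle c,X(s)\rangle$. Fix $t\le T_{j-1}<T_j$, $\delta=T_j-T_{j-1}$, and a strike $R$ with $1+\delta R>0$. Define $$e^{Z(T_{j-1})}=\frac{1}{1+\delta R}\,\frac{\mathbb E^{\mathbb Q}_{T_{j-1}}\big[e^{\int_{T_{j-1}}^{T_j}\phi(s)ds}\big]}{\mathbb E^{\mathbb Q}_{T_{j-1}}\big[e^{-\int_{T_{j-1}}^{T_j}(r_c(s)+q\lambda(s))ds}\big]},$$ and $$f(T_{j-1})=-\ln(1+\delta R)+\int_{T_{j-1}}^{T_j}(c_0(s)+a_0(s)+q b_0(s))ds+\Phi_{(0,1)}(\delta,c)-\Phi_{(0,1)}(\delta,-(a+qb)),$$ $$g(T_{j-1})=\Psi_{(0,1)}(\delta,c)-\Psi_{(0,1)}(\delta,-(a+qb)).$$ Then the conditional characteristic function of $Z(T_{j-1})$ under the $T_j$-forward measure $\mathbb Q^{T_j}$ is $$\varphi^{T_j}_Z(u)=\mathbb E^{\mathbb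 Q^{T_j}}_t\big[e^{iuZ(T_{j-1})}\big]=\frac{1}{D^{OIS}(t,T_j)}\exp\Big(iu f(T_{j-1})-\int_t^{T_j}a_0(s)ds+\Phi_{(0,1)}(\delta,-a)+\Phi_{(w,1)}(T_{j-1}-t,-a)+\big\langle\Psi_{(w,1)}(T_{j-1}-t,-a),X(t)\big\rangle\Big),$$ where $w=iu\,g(T_{j-1})+\Psi_{(0,1)}(\delta,-a)$. This holds for every $u\in\mathbb C$ for which $\Phi_{(w,1)}(T_{j-1}-t,-a)$ and $\Psi_{(w,1)}(T_{j-1}-t,-a)$ are bounded (finite).
   Context: $\mathbb E^{\mathbb Q}_t$ denotes $\mathbb E^{\mathbb Q}[\,\cdot\,|\mathcal F_t]$. $X$ is a stochastically continuous time-homogeneous affine Markov process with values in a non-empty convex set $E\subseteq\mathbb R^d$; the affine property is used in the following extended form: there exist deterministic functions $\Phi_{(u,v)}(\tau,\gamma)\in\mathbb C$ and $\Psi_{(u,v)}(\tau,\gamma)\in\mathbb C^d$ (solutions of the associated generalized Riccati ODEs with $\Phi_{(u,v)}(0,\gamma)=0$, $\Psi_{(u,v)}(0,\gamma)=u$) such that for all $s\le S$, $\gamma\in\mathbb R^d$ and all $(u,v)\in\mathbb C^{d}\times\mathbb C$ for which the left side is finite, $$\mathbb E^{\mathbb Q}_s\Big[\exp\Big(\langle u,X(S)\rangle+v\int_s^S\langle\gamma,X(r)\rangle dr\Big)\Big]=\exp\big(\Phi_{(u,v)}(S-s,\gamma)+\langle\Psi_{(u,v)}(S-s,\gamma),X(s)\rangle\big).$$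 The OIS discount factor is $D^{OIS}(t,T)=\mathbb E^{\mathbb Q}_t\big[e^{-\int_t^T r_c(s)ds}\big]$. The $T_j$-forward measure $\mathbb Q^{T_j}$ is defined (conditionally on $\mathcal F_t$) by $\frac{d\mathbb Q^{T_j}}{d\mathbb Q}\big|_{\mathcal F_{T_j}}=\frac{e^{-\int_t^{T_j}r_c(s)ds}}{D^{OIS}(t,T_j)}$, so that $\mathbb E^{\mathbb Q^{T_j}}_t[Y]=\mathbb E^{\mathbb Q}_t\big[e^{-\int_t^{T_j}r_c(s)ds}Y\big]/D^{OIS}(t,T_j)$. *)

theory Defs
  imports "HOL-Probability.Probability"
begin

definition cinner :: "complex ^ 'd \<Rightarrow> real ^ 'd \<Rightarrow> complex" where
  "cinner u x = (\<Sum>i\<in>UNIV. u $ i * complex_of_real (x $ i))"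

text \<open>Conditional expectation of a complex-valued random variable given the
  sub-sigma-algebra N, taken componentwise via the library's real conditional
  expectation (defined up to null sets).\<close>
definition cond_expC :: "'w measure \<Rightarrow> 'w measure \<Rightarrow> ('w \<Rightarrow> complex) \<Rightarrow> 'w \<Rightarrow> complex" where
  "cond_expC M N Y w =
     complex_of_real (real_cond_exp M N (\<lambda>v. Re (Y v)) w)
     + \<i> * complex_of_real (real_cond_exp M N (\<lambda>v. Im (Y v)) w)"

definition path_int :: "(real \<Rightarrow> 'w \<Rightarrow> real ^ 'd) \<Rightarrow> real ^ 'd \<Rightarrow> real \<Rightarrow> real \<Rightarrow> 'w \<Rightarrow> real" where
  "path_int X \<gamma> s S w = (LBINT r:{s..S}. \<gamma> \<bullet> X r w)"

text \<open>The extended affine property of X with functions \<Phi>, \<Psi>: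
  \<open>\<Phi> u v \<tau> \<gamma>\<close> stands for \<open>\<Phi>_(u,v)(\<tau>,\<gamma>)\<close>, similarly \<Psi>.
  "Left side finite" is read as integrability of the (complex) exponential.\<close>
definition affine_property ::
  "'w measure \<Rightarrow> (real \<Rightarrow> 'w measure) \<Rightarrow> (real \<Rightarrow> 'w \<Rightarrow> real ^ 'd)
   \<Rightarrow> (complex ^ 'd \<Rightarrow> complex \<Rightarrow> real \<Rightarrow> real ^ 'd \<Rightarrow> complex)
   \<Rightarrow> (complex ^ 'd \<Rightarrow> complex \<Rightarrow> real \<Rightarrow> real ^ 'd \<Rightarrow> complex ^ 'd) \<Rightarrow> bool" where
  "affine_property M F X \<Phi> \<Psi> \<longleftrightarrow>
     (\<forall>s S \<gamma> u v. 0 \<le> s \<longrightarrow> s \<le> S \<longrightarrow>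
        integrable M (\<lambda>w. exp (cinner u (X S w) + v * complex_of_real (path_int X \<gamma> s S w))) \<longrightarrow>
        (AE w in M. cond_expC M (F s)
            (\<lambda>w. exp (cinner u (X S w) + v * complex_of_real (path_int X \<gamma> s S w))) w
          = exp (\<Phi> u v (S - s) \<gamma> + cinner (\<Psi> u v (S - s) \<gamma>) (X s w))))"

definition time_homogeneous_markov ::
  "'w measure \<Rightarrow> (real \<Rightarrow> 'w measure) \<Rightarrow> (real \<Rightarrow> 'w \<Rightarrow> real ^ 'd) \<Rightarrow> bool" where
  "time_homogeneous_markov M F X \<longleftrightarrow>
     (\<exists>P :: real \<Rightarrow> (real ^ 'd \<Rightarrow> real) \<Rightarrow> real ^ 'd \<Rightarrow> real.
        \<forall>f s S. f \<in> borel_measurable borel \<longrightarrow> bounded (range f) \<longrightarrow> 0 \<le> s \<longrightarrow> s \<le> S \<longrightarrow>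
          (AE w in M. real_cond_exp M (F s) (\<lambda>v. f (X S v)) w = P (S - s) f (X s w)))"

definition stoch_continuous :: "'w measure \<Rightarrow> (real \<Rightarrow> 'w \<Rightarrow> real ^ 'd) \<Rightarrow> bool" where
  "stoch_continuous M X \<longleftrightarrow>
     (\<forall>t\<ge>0. \<forall>\<epsilon>>0. ((\<lambda>s. measure M {w \<in> space M. \<epsilon> < dist (X s w) (X t w)}) \<longlongrightarrow> 0)
        (at t within {0..}))"

end

theory Submission
  imports Defs
begin

text \<open>Under the forward measure the characteristic function is
  E_t[exp(-\<integral>_t^{T_j} r_c) exp(iuZ)] / D(t,T_j).
  The affine transform formula with (u,v) = (0,1), applied at time T_{j-1} to the numerator and
  the denominator in the definition of Z, shows that Z(T_{j-1}) = f + \<langle>g, X(T_{j-1})\<rangle> is affine in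
  the state. Splitting the discount integral at T_{j-1} and conditioning first on F_{T_{j-1}}
  replaces the discount over [T_{j-1}, T_j] by exp(\<Phi>_(0,1)(\<delta>,-a) + \<langle>\<Psi>_(0,1)(\<delta>,-a), X(T_{j-1})\<rangle>);
  what remains, conditioned on F_t, is again an affine transform, now with initial vector w.\<close>

lemma exp_eq_of_real_exp_Re: "Im z = 0 \<Longrightarrow> exp z = complex_of_real (exp (Re z))"
  by (metis complex_eq exp_of_real complex_of_real_def Complex_eq)

lemma cinner_zero_left [simp]: "cinner 0 x = 0"
  by (simp add: cinner_def)

lemma cinner_add_left: "cinner (u + v) x = cinner u x + cinner v x"
  by (simp add: cinner_def distrib_right sum.distrib)

lemma cinner_diff_left: "cinner (u - v) x = cinner u x - cinner v x"
  by (simp add: cinner_def left_diff_distrib sum_subtractf)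

lemma cinner_scale_left: "cinner (c *s v) x = c * cinner v x"
  by (simp add: cinner_def sum_distrib_left mult.assoc)

lemma Im_cinner_eq_0: "(\<forall>i. Im (v $ i) = 0) \<Longrightarrow> Im (cinner v x) = 0"
  by (simp add: cinner_def)

lemma borel_measurable_cinner [measurable]:
  assumes "f \<in> borel_measurable N"
  shows "(\<lambda>w. cinner v (f w)) \<in> borel_measurable N"
proof -
  have "continuous_on UNIV (cinner v)"
    unfolding cinner_def by (intro continuous_intros)
  then show ?thesis
    using borel_measurable_continuous_onI measurable_compose assms by blast
qed

lemma set_integral_minus: "(LINT r:A|M. - f r) = - (LINT r:A|M. f r)"
  by (simp add: set_lebesgue_integral_def)

lemma set_integral_minus_affine:
  fixes x :: "'b \<Rightarrow> 'a::real_inner"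
  shows "- (LINT r:A|M. h r + \<gamma> \<bullet> x r) = (LINT r:A|M. - h r + (- \<gamma>) \<bullet> x r)"
  using set_integral_minus[of M A "\<lambda>r. h r + \<gamma> \<bullet> x r"] by simp

lemma set_integrable_inner_right:
  fixes X :: "'b \<Rightarrow> 'a::euclidean_space"
  assumes "set_integrable M A X"
  shows "set_integrable M A (\<lambda>r. \<gamma> \<bullet> X r)"
proof -
  have eq: "(\<lambda>r. indicator A r *\<^sub>R (\<gamma> \<bullet> X r)) = (\<lambda>r. \<gamma> \<bullet> (indicator A r *\<^sub>R X r))"
    by (simp add: fun_eq_iff)
  show ?thesis
    using assms unfolding set_integrable_def eq by (rule integrable_inner_right)
qed

lemma set_integral_Icc_split:
  fixes f :: "real \<Rightarrow> 'b::{banach, second_countable_topology}"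
  assumes "s \<le> r" "r \<le> S" "set_integrable lborel {s..S} f"
  shows "(LBINT x:{s..S}. f x) = (LBINT x:{s..r}. f x) + (LBINT x:{r..S}. f x)"
proof -
  have "(LBINT x:{s..r} \<union> {r..S}. f x) = (LBINT x:{s..r}. f x) + (LBINT x:{r..S}. f x)"
  proof (rule set_integral_Un_AE)
    show "AE x in lborel. \<not> (x \<in> {s..r} \<and> x \<in> {r..S})"
      using AE_lborel_singleton[of r] by eventually_elim auto
    show "set_integrable lborel {s..r} f" "set_integrable lborel {r..S} f"
      using assms by (auto intro: set_integrable_subset)
  qed auto
  moreover have "{s..r} \<union> {r..S} = {s..S}" using assms by auto
  ultimately show ?thesis by simp
qed

section \<open>Complex conditional expectation\<close>

context sigma_finite_subalgebra
begin

lemma cond_expC_cong: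
  assumes "AE x in M. f x = g x" and [measurable]: "f \<in> borel_measurable M" "g \<in> borel_measurable M"
  shows "AE x in M. cond_expC M F f x = cond_expC M F g x"
proof -
  have "AE x in M. real_cond_exp M F (\<lambda>v. Re (f v)) x = real_cond_exp M F (\<lambda>v. Re (g v)) x"
    by (rule real_cond_exp_cong) (use assms in auto)
  moreover have "AE x in M. real_cond_exp M F (\<lambda>v. Im (f v)) x = real_cond_exp M F (\<lambda>v. Im (g v)) x"
    by (rule real_cond_exp_cong) (use assms in auto)
  ultimately show ?thesis unfolding cond_expC_def by auto
qed

lemma cond_expC_cmult:
  assumes "integrable M f"
  shows "AE x in M. cond_expC M F (\<lambda>w. c * f w) x = c * cond_expC M F f x"
proof -
  have iR: "integrable M (\<lambda>v. Re (f v))" and iI: "integrable M (\<lambda>v. Im (f v))"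
    using assms by auto
  have "AE x in M. real_cond_exp M F (\<lambda>v. Re c * Re (f v) - Im c * Im (f v)) x
      = real_cond_exp M F (\<lambda>v. Re c * Re (f v)) x - real_cond_exp M F (\<lambda>v. Im c * Im (f v)) x"
    by (rule real_cond_exp_diff) (use iR iI in auto)
  moreover have "AE x in M. real_cond_exp M F (\<lambda>v. Re c * Im (f v) + Im c * Re (f v)) x
      = real_cond_exp M F (\<lambda>v. Re c * Im (f v)) x + real_cond_exp M F (\<lambda>v. Im c * Re (f v)) x"
    by (rule real_cond_exp_add) (use iR iI in auto)
  moreover note real_cond_exp_cmult[OF iR, of "Re c"] real_cond_exp_cmult[OF iI, of "Im c"]
    real_cond_exp_cmult[OF iR, of "Im c"] real_cond_exp_cmult[OF iI, of "Re c"]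
  ultimately show ?thesis
    unfolding cond_expC_def by eventually_elim (auto simp: complex_eq_iff algebra_simps)
qed

lemma cond_expC_of_real:
  assumes "f \<in> borel_measurable M"
  shows "AE x in M. cond_expC M F (\<lambda>w. complex_of_real (f w)) x = complex_of_real (real_cond_exp M F f x)"
proof -
  have "AE x in M. real_cond_exp M F (\<lambda>v. 0) x = 0"
    by (rule real_cond_exp_F_meas) auto
  then show ?thesis unfolding cond_expC_def by eventually_elim auto
qed

lemma nn_cond_exp_eq_real_cond_exp:
  assumes L: "integrable M L" and nonneg: "\<And>x. 0 \<le> L x"
  shows "AE x in M. nn_cond_exp M F (\<lambda>x. ennreal (L x)) x = ennreal (real_cond_exp M F L x)"
proof -
  have [measurable]: "L \<in> borel_measurable M" using L by auto
  have neg: "(\<lambda>x. ennreal (- L x)) = (\<lambda>x. 0)"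
    using nonneg by (auto simp: ennreal_neg fun_eq_iff)
  have "AE x in M. (\<lambda>x. 0::ennreal) x = nn_cond_exp M F (\<lambda>x. 0) x"
    by (rule nn_cond_exp_F_meas) simp
  moreover have "(\<integral>\<^sup>+x. nn_cond_exp M F (\<lambda>x. ennreal (L x)) x \<partial>M) = (\<integral>\<^sup>+x. ennreal (L x) \<partial>M)"
    using nn_cond_exp_intg[of "\<lambda>_. 1" "\<lambda>x. ennreal (L x)"] by simp
  then have "AE x in M. nn_cond_exp M F (\<lambda>x. ennreal (L x)) x \<noteq> \<infinity>"
    using L nonneg by (intro nn_integral_PInf_AE) (auto simp: integrable_iff_bounded)
  ultimately show ?thesis
    unfolding real_cond_exp_def neg by eventually_elim (auto simp: less_top)
qed

lemma integrable_mult_of_integrable_mult_real_cond_exp: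
  fixes K :: "'a \<Rightarrow> complex"
  assumes K[measurable]: "K \<in> borel_measurable F" and L: "integrable M L" and nonneg: "\<And>x. 0 \<le> L x"
    and int: "integrable M (\<lambda>w. K w * complex_of_real (real_cond_exp M F L w))"
  shows "integrable M (\<lambda>w. K w * complex_of_real (L w))"
proof -
  have [measurable]: "L \<in> borel_measurable M" using L by auto
  have [measurable]: "K \<in> borel_measurable M" using K measurable_from_subalg[OF subalg] by blast
  have "(\<integral>\<^sup>+w. norm (K w * complex_of_real (L w)) \<partial>M) = (\<integral>\<^sup>+w. ennreal (norm (K w)) * ennreal (L w) \<partial>M)"
    using nonneg by (intro nn_integral_cong) (simp add: norm_mult ennreal_mult)
  also have "\<dots> = (\<integral>\<^sup>+w. ennreal (norm (K w)) * nn_cond_exp M F (\<lambda>x. ennreal (L x)) w \<partial>M)"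
    by (rule nn_cond_exp_intg[symmetric]) auto
  also have "\<dots> = (\<integral>\<^sup>+w. ennreal (norm (K w)) * ennreal (real_cond_exp M F L w) \<partial>M)"
    using nn_cond_exp_eq_real_cond_exp[OF L nonneg] by (intro nn_integral_cong_AE) auto
  also have "\<dots> = (\<integral>\<^sup>+w. norm (K w * complex_of_real (real_cond_exp M F L w)) \<partial>M)"
    using real_cond_exp_pos[of L] nonneg
    by (intro nn_integral_cong_AE) (auto simp: norm_mult ennreal_mult)
  also have "\<dots> < \<infinity>" using int by (simp add: integrable_iff_bounded)
  finally show ?thesis by (simp add: integrable_iff_bounded)
qed

end

section \<open>Time integrals of adapted processes\<close>

context sigma_finite_measure
begin

lemma integrable_indicator_mult_bounded:
  fixes f :: "real \<Rightarrow> 'a \<Rightarrow> real"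
  assumes [measurable]: "(\<lambda>(r, w). f r w) \<in> borel_measurable (lborel \<Otimes>\<^sub>M M)"
    and bound: "\<And>r w. \<bar>f r w\<bar> \<le> B" and k: "integrable M k"
  shows "integrable (lborel \<Otimes>\<^sub>M M) (\<lambda>(r, w). indicator {s..S} r * f r w * k w)"
proof -
  interpret P: pair_sigma_finite lborel M ..
  have [measurable]: "k \<in> borel_measurable M" using k by auto
  have [measurable]: "\<And>r. f r \<in> borel_measurable M"
    using measurable_Pair2 by force
  have norm_bound: "norm (indicator {s..S} r * f r w * k w) \<le> indicator {s..S} r * (\<bar>B\<bar> * norm (k w))"
    for r w by (auto simp: abs_mult indicator_def intro!: mult_right_mono order.trans[OF bound])
  have section_integrable: "integrable M (\<lambda>w. indicator {s..S} r * f r w * k w)" for r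
    by (rule Bochner_Integration.integrable_bound[of _ "\<lambda>w. indicator {s..S} r * (\<bar>B\<bar> * norm (k w))"])
      (use k norm_bound in auto)
  show ?thesis
  proof (rule P.Fubini_integrable)
    show "integrable lborel (\<lambda>r. \<integral>w. norm ((\<lambda>(r, w). indicator {s..S} r * f r w * k w) (r, w)) \<partial>M)"
    proof (rule Bochner_Integration.integrable_bound)
      show "integrable lborel (\<lambda>r. indicator {s..S} r * (\<bar>B\<bar> * (\<integral>w. norm (k w) \<partial>M)))"
        by (intro integrable_mult_left) (auto simp: emeasure_lborel_Icc_eq)
      have "(\<integral>w. norm (indicator {s..S} r * f r w * k w) \<partial>M) \<le> indicator {s..S} r * (\<bar>B\<bar> * (\<integral>w. norm (k w) \<partial>M))"
        for r
        using integral_mono[OF integrable_norm[OF section_integrable] _ norm_bound, of r] k by simp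
      then show "AE r in lborel. norm (\<integral>w. norm ((\<lambda>(r, w). indicator {s..S} r * f r w * k w) (r, w)) \<partial>M)
          \<le> norm (indicator {s..S} r * (\<bar>B\<bar> * (\<integral>w. norm (k w) \<partial>M)))"
        by (intro AE_I2) (simp add: abs_mult)
    qed measurable
    show "AE r in lborel. integrable M (\<lambda>w. (\<lambda>(r, w). indicator {s..S} r * f r w * k w) (r, w))"
      using section_integrable by simp
  qed measurable
qed

end

text \<open>Joint measurability refers to \<open>M\<close>, not to \<open>F\<close>, so the time integral of an
  \<open>F\<close>-adapted process is in general only almost everywhere equal to an \<open>F\<close>-measurable function.
  For bounded integrands, testing against \<open>h = sgn (Y - E[Y|F])\<close> and moving the conditional
  expectation onto the integrand by Fubini gives \<open>E |Y - E[Y|F]| = 0\<close>.\<close>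

context finite_measure_subalgebra
begin

lemma set_integral_AE_eq_measurable_bounded:
  fixes f :: "real \<Rightarrow> 'a \<Rightarrow> real"
  assumes f_meas[measurable]: "(\<lambda>(r, w). f r w) \<in> borel_measurable (lborel \<Otimes>\<^sub>M M)"
    and F_meas: "\<And>r. r \<in> {s..S} \<Longrightarrow> f r \<in> borel_measurable F"
    and bound: "\<And>r w. \<bar>f r w\<bar> \<le> B"
  shows "\<exists>g\<in>borel_measurable F. AE w in M. (LBINT r:{s..S}. f r w) = g w"
proof -
  interpret P: pair_sigma_finite lborel M ..
  define Y where "Y w = (\<integral>r. indicator {s..S} r * f r w \<partial>lborel)" for w
  have [measurable]: "\<And>r. f r \<in> borel_measurable M"
    using measurable_Pair2 by force
  have Yk: "integrable M (\<lambda>w. Y w * k w)"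
    and Fubini: "(\<integral>w. Y w * k w \<partial>M) = (\<integral>r. (\<integral>w. indicator {s..S} r * f r w * k w \<partial>M) \<partial>lborel)"
    if k: "integrable M k" for k
  proof -
    have eq: "(\<lambda>w. Y w * k w) = (\<lambda>w. \<integral>r. indicator {s..S} r * f r w * k w \<partial>lborel)"
      by (simp add: Y_def fun_eq_iff)
    note int = integrable_indicator_mult_bounded[OF f_meas bound k, of s S]
    show "integrable M (\<lambda>w. Y w * k w)"
      unfolding eq using P.integrable_snd[OF int] by simp
    show "(\<integral>w. Y w * k w \<partial>M) = (\<integral>r. (\<integral>w. indicator {s..S} r * f r w * k w \<partial>M) \<partial>lborel)"
      unfolding eq using P.Fubini_integral[OF int] by simp
  qed
  have Y_int: "integrable M Y" using Yk[of "\<lambda>_. 1"] by simp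
  then have [measurable]: "Y \<in> borel_measurable M" by auto
  define g where "g = real_cond_exp M F Y"
  have [measurable]: "g \<in> borel_measurable F" "g \<in> borel_measurable M"
    unfolding g_def by simp_all
  have g_int: "integrable M g" unfolding g_def by (rule real_cond_exp_int(1)[OF Y_int])
  define h where "h w = sgn (Y w - g w)" for w
  have [measurable]: "h \<in> borel_measurable M" unfolding h_def by measurable
  have h_int: "integrable M h"
    by (rule Bochner_Integration.integrable_bound[of _ "\<lambda>_. 1::real"]) (auto simp: h_def sgn_if)
  have gh_int: "integrable M (\<lambda>w. g w * h w)"
    by (rule Bochner_Integration.integrable_bound[OF g_int]) (auto simp: h_def sgn_if)
  define hF where "hF = real_cond_exp M F h"
  have [measurable]: "hF \<in> borel_measurable F" unfolding hF_def by simp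
  have hF_int: "integrable M hF" unfolding hF_def by (rule real_cond_exp_int(1)[OF h_int])
  have "(\<integral>w. indicator {s..S} r * f r w * h w \<partial>M) = (\<integral>w. indicator {s..S} r * f r w * hF w \<partial>M)" for r
  proof (cases "r \<in> {s..S}")
    case True
    have [measurable]: "f r \<in> borel_measurable F" using F_meas[OF True] .
    have "integrable M (\<lambda>w. f r w * h w)"
      by (rule Bochner_Integration.integrable_bound[of _ "\<lambda>_. B"])
        (use bound in \<open>auto simp: h_def sgn_if abs_mult intro: order_trans[OF _ abs_ge_self]\<close>)
    from real_cond_exp_intg(2)[OF this] show ?thesis
      using True by (simp add: hF_def mult.assoc)
  qed simp
  then have "(\<integral>w. Y w * h w \<partial>M) = (\<integral>w. Y w * hF w \<partial>M)"
    using Fubini[OF h_int] Fubini[OF hF_int] by simp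
  also have "\<dots> = (\<integral>w. hF w * g w \<partial>M)"
    using real_cond_exp_intg(2)[of hF Y] Yk[OF hF_int] by (simp add: g_def mult.commute)
  also have "\<dots> = (\<integral>w. g w * h w \<partial>M)"
    using real_cond_exp_intg(2)[OF gh_int] by (simp add: hF_def mult.commute)
  finally have "(\<integral>w. Y w * h w - g w * h w \<partial>M) = 0"
    using Yk[OF h_int] gh_int by simp
  moreover have "(\<integral>w. Y w * h w - g w * h w \<partial>M) = (\<integral>w. \<bar>Y w - g w\<bar> \<partial>M)"
    by (rule Bochner_Integration.integral_cong) (auto simp: h_def sgn_if)
  ultimately have "(\<integral>w. \<bar>Y w - g w\<bar> \<partial>M) = 0"
    by simp
  then have "AE w in M. \<bar>Y w - g w\<bar> = 0"
    using integral_nonneg_eq_0_iff_AE[of M "\<lambda>w. \<bar>Y w - g w\<bar>"] Y_int g_int by auto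
  then show ?thesis
    using \<open>g \<in> borel_measurable F\<close> by (auto simp: Y_def set_lebesgue_integral_def)
qed

lemma set_integral_AE_eq_measurable:
  fixes f :: "real \<Rightarrow> 'a \<Rightarrow> real"
  assumes [measurable]: "(\<lambda>(r, w). f r w) \<in> borel_measurable (lborel \<Otimes>\<^sub>M M)"
    and F_meas: "\<And>r. r \<in> {s..S} \<Longrightarrow> f r \<in> borel_measurable F"
    and paths: "\<And>w. w \<in> space M \<Longrightarrow> set_integrable lborel {s..S} (\<lambda>r. f r w)"
  shows "\<exists>g\<in>borel_measurable F. AE w in M. (LBINT r:{s..S}. f r w) = g w"
proof -
  define f_n where "f_n n r w = max (- real n) (min (real n) (f r w))" for n r w
  have "\<exists>g\<in>borel_measurable F. AE w in M. (LBINT r:{s..S}. f_n n r w) = g w" for n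
  proof (rule set_integral_AE_eq_measurable_bounded[where B="real n"])
    show "(\<lambda>(r, w). f_n n r w) \<in> borel_measurable (lborel \<Otimes>\<^sub>M M)"
      unfolding f_n_def by measurable
    show "\<And>r. r \<in> {s..S} \<Longrightarrow> f_n n r \<in> borel_measurable F"
      unfolding f_n_def using F_meas by measurable
  qed (auto simp: f_n_def)
  then obtain g_n where g_n: "\<And>n. g_n n \<in> borel_measurable F"
    "\<And>n. AE w in M. (LBINT r:{s..S}. f_n n r w) = g_n n w" by metis
  define g where "g w = lim (\<lambda>n. g_n n w)" for w
  have "g \<in> borel_measurable F" unfolding g_def using g_n(1) by measurable
  moreover have "AE w in M. \<forall>n. (LBINT r:{s..S}. f_n n r w) = g_n n w"
    using g_n(2) by (simp add: AE_all_countable)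
  then have "AE w in M. (LBINT r:{s..S}. f r w) = g w"
    using AE_space
  proof eventually_elim
    case (elim w)
    have [measurable]: "(\<lambda>r. f r w) \<in> borel_measurable lborel"
      using measurable_Pair1[OF \<open>(\<lambda>(r, w). f r w) \<in> borel_measurable (lborel \<Otimes>\<^sub>M M)\<close> elim(2)] by simp
    have "(\<lambda>n. \<integral>r. indicator {s..S} r * f_n n r w \<partial>lborel) \<longlonglongrightarrow> (\<integral>r. indicator {s..S} r * f r w \<partial>lborel)"
    proof (rule integral_dominated_convergence[where w="\<lambda>r. \<bar>indicator {s..S} r * f r w\<bar>"])
      show "integrable lborel (\<lambda>r. \<bar>indicator {s..S} r * f r w\<bar>)"
        using paths[OF elim(2)] by (simp add: set_integrable_def)
      show "AE r in lborel. (\<lambda>n. indicator {s..S} r * f_n n r w) \<longlonglongrightarrow> indicator {s..S} r * f r w"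
      proof (rule AE_I2, rule tendsto_mult_left, rule tendsto_eventually)
        fix r
        obtain N :: nat where "\<bar>f r w\<bar> \<le> real N" using real_arch_simple by blast
        then show "\<forall>\<^sub>F n in sequentially. f_n n r w = f r w"
          unfolding eventually_sequentially f_n_def by (intro exI[of _ N]) auto
      qed
      show "(\<lambda>r. indicator {s..S} r * f_n n r w) \<in> borel_measurable lborel" for n
        unfolding f_n_def by measurable
      show "AE r in lborel. norm (indicator {s..S} r * f_n n r w) \<le> \<bar>indicator {s..S} r * f r w\<bar>" for n
        unfolding f_n_def by (auto simp: indicator_def)
    qed measurable
    then have "(\<lambda>n. g_n n w) \<longlonglongrightarrow> (LBINT r:{s..S}. f r w)"
      using elim(1) by (simp add: set_lebesgue_integral_def)
    then show ?case unfolding g_def by (simp add: limI)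
  qed
  ultimately show ?thesis by blast
qed

lemma cond_expC_tower_mult:
  fixes K :: "'a \<Rightarrow> complex"
  assumes H: "subalgebra F H"
    and K[measurable]: "K \<in> borel_measurable F" and L: "integrable M L" and nonneg: "\<And>x. 0 \<le> L x"
    and [measurable]: "L' \<in> borel_measurable M"
    and L': "AE w in M. real_cond_exp M F L w = L' w"
    and int: "integrable M (\<lambda>w. K w * complex_of_real (L' w))"
  shows "integrable M (\<lambda>w. K w * complex_of_real (L w))"
    and "AE w in M. cond_expC M H (\<lambda>w. K w * complex_of_real (L w)) w
                  = cond_expC M H (\<lambda>w. K w * complex_of_real (L' w)) w"
proof -
  have MH: "subalgebra M H" using H subalg by (auto simp: subalgebra_def)
  interpret H: finite_measure_subalgebra M H by unfold_locales (rule MH)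
  have [measurable]: "L \<in> borel_measurable M" using L by auto
  have [measurable]: "K \<in> borel_measurable M" using K measurable_from_subalg[OF subalg] by blast
  have "integrable M (\<lambda>w. K w * complex_of_real (real_cond_exp M F L w))"
    using int L' by (subst integrable_cong_AE) auto
  then show KL: "integrable M (\<lambda>w. K w * complex_of_real (L w))"
    by (rule integrable_mult_of_integrable_mult_real_cond_exp[OF K L nonneg])
  have part: "AE w in M. real_cond_exp M H (\<lambda>v. P (K v) * L v) w = real_cond_exp M H (\<lambda>v. P (K v) * L' v) w"
    if P: "P = Re \<or> P = Im" for P
  proof -
    have [measurable]: "(\<lambda>v. P (K v)) \<in> borel_measurable F" using P by auto
    have PKL: "integrable M (\<lambda>v. P (K v) * L v)"
      using P integrable_Re[OF KL] integrable_Im[OF KL] by auto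
    have "AE w in M. real_cond_exp M F (\<lambda>v. P (K v) * L v) w = P (K w) * L' w"
      using real_cond_exp_mult[of "\<lambda>v. P (K v)" L] PKL L' by auto
    then have "AE w in M. real_cond_exp M H (real_cond_exp M F (\<lambda>v. P (K v) * L v)) w
                     = real_cond_exp M H (\<lambda>v. P (K v) * L' v) w"
      using P by (intro H.real_cond_exp_cong) auto
    with H.real_cond_exp_nested_subalg[OF subalg H PKL] show ?thesis
      by eventually_elim simp
  qed
  from part[OF disjI1[OF refl]] part[OF disjI2[OF refl]]
  show "AE w in M. cond_expC M H (\<lambda>w. K w * complex_of_real (L w)) w
                  = cond_expC M H (\<lambda>w. K w * complex_of_real (L' w)) w"
    unfolding cond_expC_def by eventually_elim simp
qed

end

section \<open>Affine processes\<close>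

locale affine_process = prob_space M
  for M :: "'w measure" and F :: "real \<Rightarrow> 'w measure" and X :: "real \<Rightarrow> 'w \<Rightarrow> real ^ 'd"
    and \<Phi> :: "complex ^ 'd \<Rightarrow> complex \<Rightarrow> real \<Rightarrow> real ^ 'd \<Rightarrow> complex"
    and \<Psi> :: "complex ^ 'd \<Rightarrow> complex \<Rightarrow> real \<Rightarrow> real ^ 'd \<Rightarrow> complex ^ 'd" +
  assumes filtration_F: "filtration (space M) F"
    and subalgebra_F: "\<And>s. subalgebra M (F s)"
    and adapted: "\<And>s. X s \<in> borel_measurable (F s)"
    and joint_measurable: "(\<lambda>(r, w). X r w) \<in> borel_measurable (lborel \<Otimes>\<^sub>M M)"
    and paths_integrable: "\<And>w s S. w \<in> space M \<Longrightarrow> set_integrable lborel {s..S} (\<lambda>r. X r w)"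
    and affine: "affine_property M F X \<Phi> \<Psi>"
    and real_Phi_Psi_0_1: "\<And>\<tau> \<gamma>. Im (\<Phi> 0 1 \<tau> \<gamma>) = 0 \<and> (\<forall>i. Im (\<Psi> 0 1 \<tau> \<gamma> $ i) = 0)"
begin

lemma X_measurable [measurable]: "X s \<in> borel_measurable M"
  using measurable_from_subalg[OF subalgebra_F adapted] .

lemma subalgebra_F_mono: "s \<le> S \<Longrightarrow> subalgebra (F S) (F s)"
  using filtration.sets_F_mono[OF filtration_F] filtration.space_F[OF filtration_F]
  by (auto simp: subalgebra_def)

lemma inner_X_joint_measurable:
  "(\<lambda>(r, w). \<gamma> \<bullet> X r w) \<in> borel_measurable (lborel \<Otimes>\<^sub>M M)"
proof -
  have "(\<lambda>p. \<gamma> \<bullet> (\<lambda>(r, w). X r w) p) \<in> borel_measurable (lborel \<Otimes>\<^sub>M M)"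
    using joint_measurable by measurable
  then show ?thesis by (simp add: case_prod_beta)
qed

lemma path_int_measurable [measurable]: "path_int X \<gamma> s S \<in> borel_measurable M"
proof -
  have "(\<lambda>p. X (snd p) (fst p)) \<in> borel_measurable (M \<Otimes>\<^sub>M lborel)"
    using measurable_compose[OF measurable_pair_swap' joint_measurable] by (simp add: case_prod_beta)
  then have "(\<lambda>(w, r). indicator {s..S} r *\<^sub>R (\<gamma> \<bullet> X r w)) \<in> borel_measurable (M \<Otimes>\<^sub>M lborel)"
    by (simp add: case_prod_beta) measurable
  then show ?thesis
    unfolding path_int_def set_lebesgue_integral_def by (rule lborel.borel_measurable_lebesgue_integral)
qed

lemma set_integrable_inner_X:
  "w \<in> space M \<Longrightarrow> set_integrable lborel {s..S} (\<lambda>r. \<gamma> \<bullet> X r w)"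
  by (rule set_integrable_inner_right[OF paths_integrable])

lemma set_integral_affine_path:
  assumes "w \<in> space M" "set_integrable lborel {s..S} h"
  shows "(LBINT r:{s..S}. h r + \<gamma> \<bullet> X r w) = (LBINT r:{s..S}. h r) + path_int X \<gamma> s S w"
  unfolding path_int_def using set_integral_add(2)[OF assms(2) set_integrable_inner_X[OF assms(1)]]
  by simp

lemma path_int_split:
  assumes "w \<in> space M" "s \<le> r" "r \<le> S"
  shows "path_int X \<gamma> s S w = path_int X \<gamma> s r w + path_int X \<gamma> r S w"
  unfolding path_int_def using assms(2,3) set_integrable_inner_X[OF assms(1)]
  by (rule set_integral_Icc_split)

lemma path_int_AE_eq_measurable:
  obtains g where "g \<in> borel_measurable (F S)" "AE w in M. path_int X \<gamma> s S w = g w"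
proof -
  interpret finite_measure_subalgebra M "F S" by unfold_locales (rule subalgebra_F)
  have "\<exists>g\<in>borel_measurable (F S). AE w in M. (LBINT r:{s..S}. \<gamma> \<bullet> X r w) = g w"
  proof (rule set_integral_AE_eq_measurable[OF inner_X_joint_measurable])
    fix r assume "r \<in> {s..S}"
    then have "X r \<in> borel_measurable (F S)"
      using measurable_from_subalg[OF subalgebra_F_mono adapted] by auto
    then show "(\<lambda>w. \<gamma> \<bullet> X r w) \<in> borel_measurable (F S)" by measurable
  qed (rule set_integrable_inner_X)
  then show ?thesis using that unfolding path_int_def by blast
qed

lemma integrable_exp_affine_integral_iff:
  assumes "set_integrable lborel {s..S} h"
  shows "integrable M (\<lambda>w. exp (LBINT r:{s..S}. h r + \<gamma> \<bullet> X r w))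
     \<longleftrightarrow> integrable M (\<lambda>w. exp (path_int X \<gamma> s S w))"
proof -
  have "integrable M (\<lambda>w. exp (LBINT r:{s..S}. h r + \<gamma> \<bullet> X r w))
     \<longleftrightarrow> integrable M (\<lambda>w. exp (LBINT r:{s..S}. h r) * exp (path_int X \<gamma> s S w))"
    by (intro Bochner_Integration.integrable_cong) (auto simp: set_integral_affine_path[OF _ assms] exp_add)
  then show ?thesis by simp
qed

lemma Im_Phi_Psi_0_1: "Im (\<Phi> 0 1 \<tau> \<gamma> + cinner (\<Psi> 0 1 \<tau> \<gamma>) x) = 0"
  using real_Phi_Psi_0_1[of \<tau> \<gamma>] Im_cinner_eq_0[of "\<Psi> 0 1 \<tau> \<gamma>" x] by simp

lemma exp_Phi_Psi_0_1_real:
  "exp (\<Phi> 0 1 \<tau> \<gamma> + cinner (\<Psi> 0 1 \<tau> \<gamma>) x)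
     = complex_of_real (exp (Re (\<Phi> 0 1 \<tau> \<gamma> + cinner (\<Psi> 0 1 \<tau> \<gamma>) x)))"
  by (rule exp_eq_of_real_exp_Re[OF Im_Phi_Psi_0_1])

lemma cond_exp_exp_path_int:
  assumes "0 \<le> s" "s \<le> S" and int: "integrable M (\<lambda>w. exp (path_int X \<gamma> s S w))"
  shows "AE w in M. real_cond_exp M (F s) (\<lambda>w. exp (path_int X \<gamma> s S w)) w
            = exp (Re (\<Phi> 0 1 (S - s) \<gamma> + cinner (\<Psi> 0 1 (S - s) \<gamma>) (X s w)))"
proof -
  interpret finite_measure_subalgebra M "F s" by unfold_locales (rule subalgebra_F)
  have eq: "(\<lambda>w. exp (cinner 0 (X S w) + 1 * complex_of_real (path_int X \<gamma> s S w)))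
      = (\<lambda>w. complex_of_real (exp (path_int X \<gamma> s S w)))"
    by (simp add: exp_of_real)
  have "integrable M (\<lambda>w. exp (cinner 0 (X S w) + 1 * complex_of_real (path_int X \<gamma> s S w)))"
    unfolding eq using int by auto
  from affine[unfolded affine_property_def, rule_format, OF assms(1,2) this]
  have "AE w in M. cond_expC M (F s) (\<lambda>w. complex_of_real (exp (path_int X \<gamma> s S w))) w
      = exp (\<Phi> 0 1 (S - s) \<gamma> + cinner (\<Psi> 0 1 (S - s) \<gamma>) (X s w))"
    unfolding eq .
  moreover have "AE w in M. cond_expC M (F s) (\<lambda>w. complex_of_real (exp (path_int X \<gamma> s S w))) w
      = complex_of_real (real_cond_exp M (F s) (\<lambda>w. exp (path_int X \<gamma> s S w)) w)"
    by (rule cond_expC_of_real) measurable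
  ultimately show ?thesis
    by eventually_elim (simp add: exp_Phi_Psi_0_1_real)
qed

lemma cond_exp_exp_affine_integral:
  assumes "0 \<le> s" "s \<le> S" and h: "set_integrable lborel {s..S} h"
    and int: "integrable M (\<lambda>w. exp (LBINT r:{s..S}. h r + \<gamma> \<bullet> X r w))"
  shows "AE w in M. real_cond_exp M (F s) (\<lambda>w. exp (LBINT r:{s..S}. h r + \<gamma> \<bullet> X r w)) w
     = exp ((LBINT r:{s..S}. h r) + Re (\<Phi> 0 1 (S - s) \<gamma> + cinner (\<Psi> 0 1 (S - s) \<gamma>) (X s w)))"
proof -
  interpret finite_measure_subalgebra M "F s" by unfold_locales (rule subalgebra_F)
  have int': "integrable M (\<lambda>w. exp (path_int X \<gamma> s S w))"
    using int integrable_exp_affine_integral_iff[OF h] by simp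
  have "AE w in M. real_cond_exp M (F s) (\<lambda>w. exp (LBINT r:{s..S}. h r + \<gamma> \<bullet> X r w)) w
      = real_cond_exp M (F s) (\<lambda>w. exp (LBINT r:{s..S}. h r) * exp (path_int X \<gamma> s S w)) w"
    using int by (intro real_cond_exp_cong) (auto simp: set_integral_affine_path[OF _ h] exp_add)
  with real_cond_exp_cmult[OF int', of "exp (LBINT r:{s..S}. h r)"]
    cond_exp_exp_path_int[OF assms(1,2) int']
  show ?thesis by eventually_elim (simp add: exp_add)
qed

lemma ln_ratio_cond_exp_affine_integrals:
  assumes "0 \<le> s" "s \<le> S" "\<rho> > 0"
    and h1: "set_integrable lborel {s..S} h1"
    and int1: "integrable M (\<lambda>w. exp (LBINT r:{s..S}. h1 r + \<gamma>1 \<bullet> X r w))"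
    and h2: "set_integrable lborel {s..S} h2"
    and int2: "integrable M (\<lambda>w. exp (LBINT r:{s..S}. h2 r + \<gamma>2 \<bullet> X r w))"
  shows "AE w in M. complex_of_real (ln (1 / \<rho> *
            (real_cond_exp M (F s) (\<lambda>v. exp (LBINT r:{s..S}. h1 r + \<gamma>1 \<bullet> X r v)) w
             / real_cond_exp M (F s) (\<lambda>v. exp (LBINT r:{s..S}. h2 r + \<gamma>2 \<bullet> X r v)) w)))
     = - complex_of_real (ln \<rho>) + complex_of_real ((LBINT r:{s..S}. h1 r) - (LBINT r:{s..S}. h2 r))
       + \<Phi> 0 1 (S - s) \<gamma>1 - \<Phi> 0 1 (S - s) \<gamma>2
       + cinner (\<Psi> 0 1 (S - s) \<gamma>1 - \<Psi> 0 1 (S - s) \<gamma>2) (X s w)"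
  using cond_exp_exp_affine_integral[OF assms(1,2) h1 int1] cond_exp_exp_affine_integral[OF assms(1,2) h2 int2]
proof eventually_elim
  case (elim w)
  define z where "z \<gamma> = \<Phi> 0 1 (S - s) \<gamma> + cinner (\<Psi> 0 1 (S - s) \<gamma>) (X s w)" for \<gamma>
  have z_real: "complex_of_real (Re (z \<gamma>)) = z \<gamma>" for \<gamma>
    using Im_Phi_Psi_0_1 by (simp add: z_def complex_eq_iff)
  define H1 H2 where "H1 = (LBINT r:{s..S}. h1 r)" and "H2 = (LBINT r:{s..S}. h2 r)"
  have "1 / \<rho> * (exp (H1 + Re (z \<gamma>1)) / exp (H2 + Re (z \<gamma>2)))
      = exp (- ln \<rho> + (H1 - H2) + Re (z \<gamma>1) - Re (z \<gamma>2))"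
    using \<open>\<rho> > 0\<close> by (simp add: exp_add exp_diff exp_minus field_simps)
  then have "complex_of_real (ln (1 / \<rho> * (exp (H1 + Re (z \<gamma>1)) / exp (H2 + Re (z \<gamma>2)))))
      = - complex_of_real (ln \<rho>) + complex_of_real (H1 - H2) + z \<gamma>1 - z \<gamma>2"
    by (simp add: z_real)
  then show ?case
    using elim by (simp add: z_def H1_def H2_def cinner_diff_left)
qed

lemma cond_expC_mult_exp_path_int_tail:
  fixes K :: "'w \<Rightarrow> complex"
  assumes "0 \<le> r" "r \<le> S" "s \<le> r"
    and K_meas: "K \<in> borel_measurable (F r)"
    and int_tail: "integrable M (\<lambda>w. exp (path_int X \<gamma> r S w))"
    and int: "integrable M (\<lambda>w. K w * exp (\<Phi> 0 1 (S - r) \<gamma> + cinner (\<Psi> 0 1 (S - r) \<gamma>) (X r w)))"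
  shows "integrable M (\<lambda>w. K w * complex_of_real (exp (path_int X \<gamma> r S w)))"
    and "AE w in M. cond_expC M (F s) (\<lambda>w. K w * complex_of_real (exp (path_int X \<gamma> r S w))) w
           = cond_expC M (F s) (\<lambda>w. K w * exp (\<Phi> 0 1 (S - r) \<gamma> + cinner (\<Psi> 0 1 (S - r) \<gamma>) (X r w))) w"
proof -
  interpret Fr: finite_measure_subalgebra M "F r" by unfold_locales (rule subalgebra_F)
  define L' where "L' w = exp (Re (\<Phi> 0 1 (S - r) \<gamma> + cinner (\<Psi> 0 1 (S - r) \<gamma>) (X r w)))" for w
  have L'_meas: "L' \<in> borel_measurable M" unfolding L'_def by measurable
  have L'_complex: "complex_of_real (L' w) = exp (\<Phi> 0 1 (S - r) \<gamma> + cinner (\<Psi> 0 1 (S - r) \<gamma>) (X r w))"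
    for w unfolding L'_def by (rule exp_Phi_Psi_0_1_real[symmetric])
  have "AE w in M. real_cond_exp M (F r) (\<lambda>w. exp (path_int X \<gamma> r S w)) w = L' w"
    unfolding L'_def using cond_exp_exp_path_int[OF assms(1,2) int_tail] .
  moreover have "integrable M (\<lambda>w. K w * complex_of_real (L' w))"
    using int by (simp add: L'_complex)
  ultimately show "integrable M (\<lambda>w. K w * complex_of_real (exp (path_int X \<gamma> r S w)))"
    and "AE w in M. cond_expC M (F s) (\<lambda>w. K w * complex_of_real (exp (path_int X \<gamma> r S w))) w
           = cond_expC M (F s) (\<lambda>w. K w * exp (\<Phi> 0 1 (S - r) \<gamma> + cinner (\<Psi> 0 1 (S - r) \<gamma>) (X r w))) w"
    using Fr.cond_expC_tower_mult[OF subalgebra_F_mono[OF \<open>s \<le> r\<close>] K_meas int_tail _ L'_meas]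
    by (simp_all add: L'_complex)
qed

lemma cond_expC_exp_path_int_two_periods:
  fixes v :: "complex ^ 'd" and \<gamma> :: "real ^ 'd" and s r S :: real
  defines "W \<equiv> v + \<Psi> 0 1 (S - r) \<gamma>"
  assumes "0 \<le> s" "s \<le> r" "r \<le> S"
    and int_tail: "integrable M (\<lambda>w. exp (path_int X \<gamma> r S w))"
    and int_W: "integrable M (\<lambda>w. exp (cinner W (X r w) + complex_of_real (path_int X \<gamma> s r w)))"
  shows "integrable M (\<lambda>w. exp (cinner v (X r w) + complex_of_real (path_int X \<gamma> s S w)))"
    and "AE w in M. cond_expC M (F s) (\<lambda>w. exp (cinner v (X r w) + complex_of_real (path_int X \<gamma> s S w))) w
           = exp (\<Phi> 0 1 (S - r) \<gamma> + \<Phi> W 1 (r - s) \<gamma> + cinner (\<Psi> W 1 (r - s) \<gamma>) (X s w))"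
proof -
  interpret Fs: finite_measure_subalgebra M "F s" by unfold_locales (rule subalgebra_F)
  obtain P where P_meas [measurable]: "P \<in> borel_measurable (F r)"
    and P: "AE w in M. path_int X \<gamma> s r w = P w"
    by (rule path_int_AE_eq_measurable)
  have [measurable]: "P \<in> borel_measurable M" "X r \<in> borel_measurable (F r)"
    using measurable_from_subalg[OF subalgebra_F P_meas] adapted .
  define K where "K w = exp (cinner v (X r w) + complex_of_real (P w))" for w
  have K_meas: "K \<in> borel_measurable (F r)" unfolding K_def by measurable
  then have [measurable]: "K \<in> borel_measurable M"
    using measurable_from_subalg[OF subalgebra_F] by blast
  define Y where "Y = (\<lambda>w. exp (cinner W (X r w) + complex_of_real (path_int X \<gamma> s r w)))"
  have KY: "AE w in M. K w * exp (\<Phi> 0 1 (S - r) \<gamma> + cinner (\<Psi> 0 1 (S - r) \<gamma>) (X r w))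
      = exp (\<Phi> 0 1 (S - r) \<gamma>) * Y w"
    using P by eventually_elim (simp add: K_def Y_def W_def cinner_add_left mult_exp_exp algebra_simps)
  moreover have "integrable M (\<lambda>w. exp (\<Phi> 0 1 (S - r) \<gamma>) * Y w)"
    using int_W unfolding Y_def by simp
  ultimately have "integrable M (\<lambda>w. K w * exp (\<Phi> 0 1 (S - r) \<gamma> + cinner (\<Psi> 0 1 (S - r) \<gamma>) (X r w)))"
    by (subst integrable_cong_AE) (auto simp: Y_def)
  note tail = cond_expC_mult_exp_path_int_tail[OF order_trans[OF \<open>0 \<le> s\<close> \<open>s \<le> r\<close>] \<open>r \<le> S\<close> \<open>s \<le> r\<close> K_meas int_tail this]
  have split: "AE w in M. exp (cinner v (X r w) + complex_of_real (path_int X \<gamma> s S w))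
      = K w * complex_of_real (exp (path_int X \<gamma> r S w))"
    using P AE_space by eventually_elim
      (simp add: K_def path_int_split[of _ s r S] assms mult_exp_exp add.assoc flip: exp_of_real)
  then show "integrable M (\<lambda>w. exp (cinner v (X r w) + complex_of_real (path_int X \<gamma> s S w)))"
    using tail(1) by (subst integrable_cong_AE) auto
  have "AE w in M. cond_expC M (F s) Y w = exp (\<Phi> W 1 (r - s) \<gamma> + cinner (\<Psi> W 1 (r - s) \<gamma>) (X s w))"
    using affine[unfolded affine_property_def, rule_format, of s r W 1 \<gamma>] assms int_W
    by (simp add: Y_def)
  moreover have "AE w in M. cond_expC M (F s) (\<lambda>w. exp (cinner v (X r w) + complex_of_real (path_int X \<gamma> s S w))) w
      = cond_expC M (F s) (\<lambda>w. K w * complex_of_real (exp (path_int X \<gamma> r S w))) w"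
    using split by (rule Fs.cond_expC_cong) auto
  moreover have "AE w in M. cond_expC M (F s)
      (\<lambda>w. K w * exp (\<Phi> 0 1 (S - r) \<gamma> + cinner (\<Psi> 0 1 (S - r) \<gamma>) (X r w))) w
      = cond_expC M (F s) (\<lambda>w. exp (\<Phi> 0 1 (S - r) \<gamma>) * Y w) w"
    using KY by (rule Fs.cond_expC_cong) (auto simp: Y_def)
  moreover note tail(2) Fs.cond_expC_cmult[OF int_W[folded Y_def], of "exp (\<Phi> 0 1 (S - r) \<gamma>)"]
  ultimately show "AE w in M. cond_expC M (F s) (\<lambda>w. exp (cinner v (X r w) + complex_of_real (path_int X \<gamma> s S w))) w
           = exp (\<Phi> 0 1 (S - r) \<gamma> + \<Phi> W 1 (r - s) \<gamma> + cinner (\<Psi> W 1 (r - s) \<gamma>) (X s w))"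
    by eventually_elim (simp add: mult_exp_exp add.assoc)
qed

lemma ln_forward_ratio_affine:
  fixes a0 b0 c0 :: "real \<Rightarrow> real" and a b c :: "real ^ 'd" and q R Tp Tj :: real
  assumes times: "0 \<le> Tp" "Tp \<le> Tj" and strike: "1 + (Tj - Tp) * R > 0"
    and a0_int: "set_integrable lborel {Tp..Tj} a0"
    and b0_int: "set_integrable lborel {Tp..Tj} b0"
    and c0_int: "set_integrable lborel {Tp..Tj} c0"
    and int_phi: "integrable M (\<lambda>v. exp (LBINT s:{Tp..Tj}. c0 s + c \<bullet> X s v))"
    and int_rcl: "integrable M (\<lambda>v. exp (- (LBINT s:{Tp..Tj}. (a0 s + a \<bullet> X s v) + q * (b0 s + b \<bullet> X s v))))"
  shows "AE w in M. complex_of_real (ln ((1 / (1 + (Tj - Tp) * R)) *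
            (real_cond_exp M (F Tp) (\<lambda>v. exp (LBINT s:{Tp..Tj}. c0 s + c \<bullet> X s v)) w
             / real_cond_exp M (F Tp)
                 (\<lambda>v. exp (- (LBINT s:{Tp..Tj}. (a0 s + a \<bullet> X s v) + q * (b0 s + b \<bullet> X s v)))) w)))
     = - complex_of_real (ln (1 + (Tj - Tp) * R)) + complex_of_real (LBINT s:{Tp..Tj}. c0 s + a0 s + q * b0 s)
       + \<Phi> 0 1 (Tj - Tp) c - \<Phi> 0 1 (Tj - Tp) (- (a + q *\<^sub>R b))
       + cinner (\<Psi> 0 1 (Tj - Tp) c - \<Psi> 0 1 (Tj - Tp) (- (a + q *\<^sub>R b))) (X Tp w)"
proof -
  have "(\<lambda>v. exp (- (LBINT s:{Tp..Tj}. (a0 s + a \<bullet> X s v) + q * (b0 s + b \<bullet> X s v))))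
      = (\<lambda>v. exp (- (LBINT s:{Tp..Tj}. (a0 s + q * b0 s) + (a + q *\<^sub>R b) \<bullet> X s v)))"
    by (simp add: algebra_simps)
  also have "\<dots> = (\<lambda>v. exp (LBINT s:{Tp..Tj}. - (a0 s + q * b0 s) + (- (a + q *\<^sub>R b)) \<bullet> X s v))"
    by (simp only: set_integral_minus_affine)
  finally have rate: "(\<lambda>v. exp (- (LBINT s:{Tp..Tj}. (a0 s + a \<bullet> X s v) + q * (b0 s + b \<bullet> X s v))))
      = (\<lambda>v. exp (LBINT s:{Tp..Tj}. - (a0 s + q * b0 s) + (- (a + q *\<^sub>R b)) \<bullet> X s v))" .
  have b0_mult: "set_integrable lborel {Tp..Tj} (\<lambda>s. q * b0 s)"
    using set_integrable_mult_right[of q lborel "{Tp..Tj}" b0] b0_int by simp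
  have rate_int: "set_integrable lborel {Tp..Tj} (\<lambda>s. - (a0 s + q * b0 s))"
    using set_integrable_mult_right[of "-1", OF set_integral_add(1)[OF a0_int b0_mult]] by simp
  have "(LBINT s:{Tp..Tj}. - (a0 s + q * b0 s)) = - ((LBINT s:{Tp..Tj}. a0 s) + q * (LBINT s:{Tp..Tj}. b0 s))"
    unfolding set_integral_minus using a0_int b0_int by simp
  then have integrals: "(LBINT s:{Tp..Tj}. c0 s) - (LBINT s:{Tp..Tj}. - (a0 s + q * b0 s))
      = (LBINT s:{Tp..Tj}. c0 s + a0 s + q * b0 s)"
    using a0_int b0_int c0_int by simp
  from ln_ratio_cond_exp_affine_integrals[OF times strike c0_int int_phi rate_int int_rcl[unfolded rate]]
  show ?thesis
    unfolding rate by (simp flip: integrals)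
qed

lemma cond_expC_discounted_exp_affine:
  fixes v :: "complex ^ 'd" and a :: "real ^ 'd" and a0 :: "real \<Rightarrow> real" and t Tp Tj :: real
  defines "W \<equiv> v + \<Psi> 0 1 (Tj - Tp) (- a)"
  assumes times: "0 \<le> t" "t \<le> Tp" "Tp \<le> Tj"
    and a0_int: "\<And>s S. set_integrable lborel {s..S} a0"
    and int_tail: "integrable M (\<lambda>w. exp (- (LBINT s:{Tp..Tj}. a0 s + a \<bullet> X s w)))"
    and int_W: "integrable M (\<lambda>w. exp (cinner W (X Tp w) + complex_of_real (path_int X (- a) t Tp w)))"
  shows "integrable M (\<lambda>w. complex_of_real (exp (- (LBINT s:{t..Tj}. a0 s + a \<bullet> X s w))) * exp (cinner v (X Tp w)))"
    and "AE w in M. cond_expC M (F t)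
            (\<lambda>w. complex_of_real (exp (- (LBINT s:{t..Tj}. a0 s + a \<bullet> X s w))) * exp (cinner v (X Tp w))) w
          = exp (- complex_of_real (LBINT s:{t..Tj}. a0 s) + \<Phi> 0 1 (Tj - Tp) (- a)
                 + \<Phi> W 1 (Tp - t) (- a) + cinner (\<Psi> W 1 (Tp - t) (- a)) (X t w))"
proof -
  interpret Ft: finite_measure_subalgebra M "F t" by unfold_locales (rule subalgebra_F)
  have a0_neg: "set_integrable lborel {s..S} (\<lambda>r. - a0 r)" for s S
    using set_integrable_mult_right[of "-1" lborel "{s..S}" a0] a0_int by simp
  have "integrable M (\<lambda>w. exp (path_int X (- a) Tp Tj w))"
    using int_tail integrable_exp_affine_integral_iff[OF a0_neg, of Tp Tj "- a"]
    by (simp add: set_integral_minus_affine)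
  note two_periods = cond_expC_exp_path_int_two_periods[OF times this, of v, folded W_def, OF int_W]
  define A0 where "A0 = complex_of_real (LBINT s:{t..Tj}. a0 s)"
  have discount: "complex_of_real (exp (- (LBINT s:{t..Tj}. a0 s + a \<bullet> X s w))) * exp (cinner v (X Tp w))
      = exp (- A0) * exp (cinner v (X Tp w) + complex_of_real (path_int X (- a) t Tj w))"
    if "w \<in> space M" for w
  proof -
    have "- (LBINT s:{t..Tj}. a0 s + a \<bullet> X s w) = - (LBINT s:{t..Tj}. a0 s) + path_int X (- a) t Tj w"
      using set_integral_affine_path[OF that a0_neg, of t Tj "- a"]
      by (simp add: set_integral_minus_affine set_integral_minus)
    then show ?thesis
      by (simp add: A0_def mult_exp_exp algebra_simps flip: exp_of_real)
  qed
  show "integrable M (\<lambda>w. complex_of_real (exp (- (LBINT s:{t..Tj}. a0 s + a \<bullet> X s w))) * exp (cinner v (X Tp w)))"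
    using two_periods(1) by (subst Bochner_Integration.integrable_cong[OF refl discount]) simp_all
  have "AE w in M. cond_expC M (F t)
      (\<lambda>w. complex_of_real (exp (- (LBINT s:{t..Tj}. a0 s + a \<bullet> X s w))) * exp (cinner v (X Tp w))) w
    = cond_expC M (F t) (\<lambda>w. exp (- A0) * exp (cinner v (X Tp w) + complex_of_real (path_int X (- a) t Tj w))) w"
    using discount by (intro Ft.cond_expC_cong AE_I2) (simp_all add: measurable_cong[OF discount])
  with Ft.cond_expC_cmult[OF two_periods(1), of "exp (- A0)"] two_periods(2)
  show "AE w in M. cond_expC M (F t)
            (\<lambda>w. complex_of_real (exp (- (LBINT s:{t..Tj}. a0 s + a \<bullet> X s w))) * exp (cinner v (X Tp w))) w
          = exp (- A0 + \<Phi> 0 1 (Tj - Tp) (- a)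
                 + \<Phi> W 1 (Tp - t) (- a) + cinner (\<Psi> W 1 (Tp - t) (- a)) (X t w))"
    by eventually_elim (simp add: mult_exp_exp algebra_simps)
qed

end

theorem proposition1:
  fixes M :: "'w measure" and F :: "real \<Rightarrow> 'w measure"
    and X :: "real \<Rightarrow> 'w \<Rightarrow> real ^ 'd" and E :: "(real ^ 'd) set"
    and \<Phi> :: "complex ^ 'd \<Rightarrow> complex \<Rightarrow> real \<Rightarrow> real ^ 'd \<Rightarrow> complex"
    and \<Psi> :: "complex ^ 'd \<Rightarrow> complex \<Rightarrow> real \<Rightarrow> real ^ 'd \<Rightarrow> complex ^ 'd"
    and a0 b0 c0 :: "real \<Rightarrow> real" and a b c :: "real ^ 'd"
    and q R t Tp Tj :: real and u :: complex
  defines "Z \<equiv> \<lambda>w. ln ((1 / (1 + (Tj - Tp) * R)) *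
                 (real_cond_exp M (F Tp) (\<lambda>v. exp (LBINT s:{Tp..Tj}. c0 s + c \<bullet> X s v)) w
                  / real_cond_exp M (F Tp)
                      (\<lambda>v. exp (- (LBINT s:{Tp..Tj}. (a0 s + a \<bullet> X s v) + q * (b0 s + b \<bullet> X s v)))) w))"
    and "D \<equiv> real_cond_exp M (F t) (\<lambda>v. exp (- (LBINT s:{t..Tj}. a0 s + a \<bullet> X s v)))"
    and "fT \<equiv> - complex_of_real (ln (1 + (Tj - Tp) * R))
              + complex_of_real (LBINT s:{Tp..Tj}. c0 s + a0 s + q * b0 s)
              + \<Phi> 0 1 (Tj - Tp) c - \<Phi> 0 1 (Tj - Tp) (- (a + q *\<^sub>R b))"
    and "W \<equiv> (\<i> * u) *s (\<Psi> 0 1 (Tj - Tp) c - \<Psi> 0 1 (Tj - Tp) (- (a + q *\<^sub>R b)))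
              + \<Psi> 0 1 (Tj - Tp) (- a)"
  assumes M: "prob_space M"
    and filt: "filtration (space M) F" and sub: "\<And>s. subalgebra M (F s)"
    and adapted: "\<And>s. X s \<in> borel_measurable (F s)"
    and joint_meas: "(\<lambda>(r, w). X r w) \<in> borel_measurable (lborel \<Otimes>\<^sub>M M)"
    and paths_int: "\<And>w s S. w \<in> space M \<Longrightarrow> set_integrable lborel {s..S} (\<lambda>r. X r w)"
    and E: "convex E" "E \<noteq> {}" and X_E: "\<And>s w. w \<in> space M \<Longrightarrow> X s w \<in> E"
    and stoch_cont: "stoch_continuous M X"
    and markov: "time_homogeneous_markov M F X"
    and affine: "affine_property M F X \<Phi> \<Psi>"
    and init: "\<And>u v \<gamma>. \<Phi> u v 0 \<gamma> = 0 \<and> \<Psi> u v 0 \<gamma> = u"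
    and real_valued: "\<And>u v \<tau> \<gamma>. (\<forall>i. Im (u $ i) = 0) \<Longrightarrow> Im v = 0 \<Longrightarrow>
                         Im (\<Phi> u v \<tau> \<gamma>) = 0 \<and> (\<forall>i. Im (\<Psi> u v \<tau> \<gamma> $ i) = 0)"
    and a0_int: "\<And>s S. set_integrable lborel {s..S} a0"
    and b0_int: "\<And>s S. set_integrable lborel {s..S} b0"
    and c0_int: "\<And>s S. set_integrable lborel {s..S} c0"
    and times: "0 \<le> t" "t \<le> Tp" "Tp < Tj"
    and strike: "1 + (Tj - Tp) * R > 0"
    and int_phi: "integrable M (\<lambda>v. exp (LBINT s:{Tp..Tj}. c0 s + c \<bullet> X s v))"
    and int_rcl: "integrable M (\<lambda>v. exp (- (LBINT s:{Tp..Tj}. (a0 s + a \<bullet> X s v) + q * (b0 s + b \<bullet> X s v))))"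
    and int_rc1: "integrable M (\<lambda>v. exp (- (LBINT s:{Tp..Tj}. a0 s + a \<bullet> X s v)))"
    and int_rc2: "integrable M (\<lambda>v. exp (- (LBINT s:{t..Tj}. a0 s + a \<bullet> X s v)))"
    and u_ok: "integrable M (\<lambda>w. exp (cinner W (X Tp w) + complex_of_real (path_int X (- a) t Tp w)))"
  shows "AE w in M.
           cond_expC M (F t)
             (\<lambda>v. complex_of_real (exp (- (LBINT s:{t..Tj}. a0 s + a \<bullet> X s v))) * exp (\<i> * u * complex_of_real (Z v))) w
             / complex_of_real (D w)
         = (1 / complex_of_real (D w)) *
           exp (\<i> * u * fT - complex_of_real (LBINT s:{t..Tj}. a0 s) + \<Phi> 0 1 (Tj - Tp) (- a)
                + \<Phi> W 1 (Tp - t) (- a) + cinner (\<Psi> W 1 (Tp - t) (- a)) (X t w))"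
proof -
  interpret affine_process M F X \<Phi> \<Psi>
    using M filt sub adapted joint_meas paths_int affine real_valued[of 0 1]
    by (simp add: affine_process_def affine_process_axioms_def)
  interpret Ft: finite_measure_subalgebra M "F t" by unfold_locales (rule sub)
  define G where "G = \<Psi> 0 1 (Tj - Tp) c - \<Psi> 0 1 (Tj - Tp) (- (a + q *\<^sub>R b))"
  have Z_affine: "AE w in M. complex_of_real (Z w) = fT + cinner G (X Tp w)"
    using ln_forward_ratio_affine[OF _ _ strike a0_int b0_int c0_int int_phi int_rcl] times
    unfolding Z_def fT_def G_def by simp
  have "W = (\<i> * u) *s G + \<Psi> 0 1 (Tj - Tp) (- a)" by (simp add: W_def G_def)
  note discounted = cond_expC_discounted_exp_affine[OF times(1,2) less_imp_le[OF times(3)] a0_int int_rc1,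
      of "(\<i> * u) *s G", folded this, OF u_ok]
  have [measurable]: "Z \<in> borel_measurable M" unfolding Z_def by measurable
  have [measurable]: "(\<lambda>v. exp (- (LBINT s:{t..Tj}. a0 s + a \<bullet> X s v))) \<in> borel_measurable M"
    using int_rc2 by auto
  have "AE w in M. complex_of_real (exp (- (LBINT s:{t..Tj}. a0 s + a \<bullet> X s w))) * exp (\<i> * u * complex_of_real (Z w))
      = exp (\<i> * u * fT) * (complex_of_real (exp (- (LBINT s:{t..Tj}. a0 s + a \<bullet> X s w))) * exp (cinner ((\<i> * u) *s G) (X Tp w)))"
    using Z_affine by eventually_elim (simp add: cinner_scale_left distrib_left mult_exp_exp)
  then have "AE w in M. cond_expC M (F t)
      (\<lambda>v. complex_of_real (exp (- (LBINT s:{t..Tj}. a0 s + a \<bullet> X s v))) * exp (\<i> * u * complex_of_real (Z v))) w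
    = cond_expC M (F t) (\<lambda>w. exp (\<i> * u * fT) *
        (complex_of_real (exp (- (LBINT s:{t..Tj}. a0 s + a \<bullet> X s w))) * exp (cinner ((\<i> * u) *s G) (X Tp w)))) w"
    by (rule Ft.cond_expC_cong) measurable
  with Ft.cond_expC_cmult[OF discounted(1), of "exp (\<i> * u * fT)"] discounted(2) show ?thesis
    by eventually_elim (simp add: mult_exp_exp algebra_simps)
qed

end
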